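(* The language $\{\,b^{2^m}c^m\mid m\ge1\,\}$ belongs to $\mathscr{L}_{rt}(\mathrm{MC\text{-}OCA}(\log n))$, i.e., it is accepted by a real-time one-way cellular automaton in which, on every accepted input $w$, each pair of neighboring cells communicates $O(\log|w|)$ times.
   Context: A CA is $\langle S,F,A,B,\#,b_l,b_r,\delta\rangle$ with communication functions $b_l,b_r:S\to B\cup\{\bot\}$ ($\bot$: nothing sent) and local transition $\delta:(B\cup\{\#,\bot\})\times S\times(B\cup\{\#,\bot\})\to S$; cells $1..|w|$ start with input letters and update synchronously by $c_{t+1}(i)=\delta(b_r(c_t(i-1)),c_t(i),b_l(c_t(i+1)))$, outer cells receiving $\#$ once at the first step and $\bot$ afterwards. Acceptance: leftmost cell enters an accepting state; real time: within $|w|$ steps. OCA: $b_r\equiv\bot$, leftmost cell gets no boundary symbol. $\mathrm{com}(i,t)$: number of steps $j<t$ with $b_r(c_j(i))\ne\bot$ or $b_l(c_j(i+1))\ne\bot$; $\mathrm{mcom}(w)=\max_{1\le i\le|w|-1}\mathrm{com}(i,t(|w|))$. $\mathrm{MC\text{-}OCA}(f)$: OCAs accepting every accepted $w$ with $\mathrm{mcom}(w)\le g(|w|)$ for some $g\in O(f)$. *)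

theory Defs
  imports Main "HOL-Library.Landau_Symbols"
begin

text \<open>Messages a cell can receive: a communication symbol, the boundary symbol #,
  or nothing (bottom).\<close>
datatype 'b cmsg = Sym 'b | Border | Silent

definition to_msg :: "'b option \<Rightarrow> 'b cmsg" where
  "to_msg x = (case x of None \<Rightarrow> Silent | Some b \<Rightarrow> Sym b)"

text \<open>Input letters are identified with states
  via the injective map inp.  None in bl/br means nothing is sent.\<close>
record ('a, 's, 'b) ca =
  states :: "'s set"
  acc :: "'s set"
  inp :: "'a \<Rightarrow> 's"
  comm :: "'b set"
  bl :: "'s \<Rightarrow> 'b option"
  br :: "'s \<Rightarrow> 'b option"
  delta :: "'b cmsg \<Rightarrow> 's \<Rightarrow> 'b cmsg \<Rightarrow> 's"

definition valid_msg :: "'b set \<Rightarrow> 'b cmsg set" where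
  "valid_msg B = Sym ` B \<union> {Border, Silent}"

definition wf_ca :: "('a, 's, 'b) ca \<Rightarrow> bool" where
  "wf_ca M \<longleftrightarrow> finite (states M) \<and> finite (comm M) \<and> acc M \<subseteq> states M
     \<and> inj (inp M) \<and> range (inp M) \<subseteq> states M
     \<and> (\<forall>s\<in>states M. bl M s \<in> Some ` comm M \<union> {None})
     \<and> (\<forall>s\<in>states M. br M s \<in> Some ` comm M \<union> {None})
     \<and> (\<forall>s\<in>states M. \<forall>x\<in>valid_msg (comm M). \<forall>y\<in>valid_msg (comm M).
            delta M x s y \<in> states M)"

definition is_oca :: "('a, 's, 'b) ca \<Rightarrow> bool" where
  "is_oca M \<longleftrightarrow> wf_ca M \<and> (\<forall>s. br M s = None)"

text \<open>Configuration of the OCA at time t on input w (cells 1..length w).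
  The leftmost cell receives no boundary symbol; the rightmost cell receives #
  at the first step and nothing afterwards.\<close>
primrec oca_cfg :: "('a, 's, 'b) ca \<Rightarrow> 'a list \<Rightarrow> nat \<Rightarrow> nat \<Rightarrow> 's" where
  "oca_cfg M w 0 = (\<lambda>i. inp M (w ! (i - 1)))"
| "oca_cfg M w (Suc t) = (\<lambda>i.
     delta M
       (if i = 1 then Silent else to_msg (br M (oca_cfg M w t (i - 1))))
       (oca_cfg M w t i)
       (if i = length w then (if t = 0 then Border else Silent)
        else to_msg (bl M (oca_cfg M w t (i + 1)))))"

definition rt_accepts :: "('a, 's, 'b) ca \<Rightarrow> 'a list \<Rightarrow> bool" where
  "rt_accepts M w \<longleftrightarrow> (\<exists>t\<le>length w. oca_cfg M w t 1 \<in> acc M)"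

definition com :: "('a, 's, 'b) ca \<Rightarrow> 'a list \<Rightarrow> nat \<Rightarrow> nat \<Rightarrow> nat" where
  "com M w i t = card {j. j < t \<and>
      (br M (oca_cfg M w j i) \<noteq> None \<or> bl M (oca_cfg M w j (i + 1)) \<noteq> None)}"

text \<open>Maximal communication between neighbouring cells, with t(|w|) = |w| (real time).\<close>
definition mcom :: "('a, 's, 'b) ca \<Rightarrow> 'a list \<Rightarrow> nat" where
  "mcom M w = Max (insert 0 {com M w i (length w) | i. 1 \<le> i \<and> i \<le> length w - 1})"

definition in_rt_MC_OCA :: "'a list set \<Rightarrow> (nat \<Rightarrow> real) \<Rightarrow> bool" where
  "in_rt_MC_OCA L f \<longleftrightarrow> (\<exists>M :: ('a, nat, nat) ca.
      is_oca M \<and> {w. rt_accepts M w} = L \<and>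
      (\<exists>g. g \<in> O(f) \<and> (\<forall>w. rt_accepts M w \<longrightarrow> real (mcom M w) \<le> g (length w))))"

datatype letter = LB | LC

definition Lbc :: "letter list set" where
  "Lbc = {replicate (2 ^ m) LB @ replicate m LC | m. m \<ge> 1}"

end

theory Submission
  imports Defs "HOL-Library.Countable" "HOL-Real_Asymp.Real_Asymp"
begin

(* Information flows only leftward, so the state of a cell depends only on the suffix of
   the input starting at that cell.  On an input b^k c^l the c-block streams l zero bits
   and then an end marker to the left; a b-cell whose suffix has k b's receives, one step
   after its right neighbour counted k-1, the binary digits of k-1 (least significant
   first) and forwards the digits of k, computed by a one-bit incrementer.  The end marker
   carries an overflow flag, so the leftmost cell can decide k = 2^l at time k + l.
   Each cell speaks only during the l+1 steps in which the digits pass by, which gives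
   the O(log n) bound on communication. *)

section \<open>One-way automata on suffixes and their encoding as OCAs\<close>

lemma decode_to_msg: "map_cmsg from_nat (to_msg (map_option to_nat x)) = to_msg x"
  by (cases x) (simp_all add: to_msg_def)

text \<open>A one-way automaton is given by the initial state of each letter, the message a state
  sends to its left neighbour, and the update from the message received from the right.\<close>

locale one_way_automaton =
  fixes start :: "'a \<Rightarrow> 's::countable"
    and emit :: "'s \<Rightarrow> 'm::countable option"
    and update :: "'m cmsg \<Rightarrow> 's \<Rightarrow> 's"
begin

text \<open>The state at time t of the cell whose suffix of the input is u.\<close>

primrec run :: "nat \<Rightarrow> 'a list \<Rightarrow> 's" where
  "run 0 u = start (hd u)"
| "run (Suc t) u = update
     (if tl u = [] then (if t = 0 then Border else Silent) else to_msg (emit (run t (tl u))))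
     (run t u)"

definition inbox :: "nat \<Rightarrow> 'a list \<Rightarrow> 'm cmsg" where
  "inbox t v = (if v = [] then (if t = 0 then Border else Silent) else to_msg (emit (run t v)))"

lemma run_Suc_Cons [simp]: "run (Suc t) (a # v) = update (inbox t v) (run t (a # v))"
  by (simp add: inbox_def)

declare run.simps(2) [simp del]

definition encoding :: "'s set \<Rightarrow> ('a, nat, nat) ca" where
  "encoding A = \<lparr> states = range (to_nat :: 's \<Rightarrow> nat), acc = to_nat ` A, inp = to_nat \<circ> start,
     comm = to_nat ` (Some -` range emit), bl = map_option to_nat \<circ> emit \<circ> from_nat,
     br = (\<lambda>_. None), delta = (\<lambda>_ n y. to_nat (update (map_cmsg from_nat y) (from_nat n))) \<rparr>"

lemma encoding_cfg:
  "1 \<le> i \<Longrightarrow> i \<le> length w \<Longrightarrow> oca_cfg (encoding A) w t i = to_nat (run t (drop (i - 1) w))"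
proof (induction t arbitrary: i)
  case 0
  then show ?case by (simp add: encoding_def hd_drop_conv_nth)
next
  case (Suc t)
  have "drop (i - 1) w = w ! (i - 1) # drop i w"
    using Suc.prems Cons_nth_drop_Suc[of "i - 1" w] by simp
  then have run: "run (Suc t) (drop (i - 1) w) = update (inbox t (drop i w)) (run t (drop (i - 1) w))"
    by (metis run_Suc_Cons)
  show ?case
  proof (cases "i = length w")
    case True
    then have "length w = i" by simp
    then show ?thesis unfolding run using Suc.IH[OF Suc.prems] by (simp add: encoding_def inbox_def)
  next
    case False
    then have "oca_cfg (encoding A) w t (i + 1) = to_nat (run t (drop i w))"
      using Suc.IH[of "i + 1"] Suc.prems by simp
    then show ?thesis unfolding run using Suc.IH[OF Suc.prems] Suc.prems False
      by (simp add: encoding_def inbox_def decode_to_msg)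
  qed
qed

lemma is_oca_encoding:
  assumes "finite (UNIV :: 's set)" "inj start"
  shows "is_oca (encoding A)"
  unfolding is_oca_def wf_ca_def
proof (intro conjI ballI allI)
  have "finite (Some -` range emit)"
    using assms(1) by (intro finite_vimageI) (auto simp: inj_on_def)
  then show "finite (comm (encoding A))" by (simp add: encoding_def)
  show "bl (encoding A) n \<in> Some ` comm (encoding A) \<union> {None}" for n
  proof (cases "emit (from_nat n)")
    case (Some a)
    then have "a \<in> Some -` range emit" by (metis rangeI vimage_eq)
    then show ?thesis using Some by (simp add: encoding_def)
  qed (simp add: encoding_def)
qed (use assms in \<open>auto simp: encoding_def inj_compose\<close>)

text \<open>No input letter starts in an accepting state, so the empty word is rejected.\<close>

lemma rt_accepts_encoding:
  assumes "\<And>a. start a \<notin> A"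
  shows "rt_accepts (encoding A) w \<longleftrightarrow> w \<noteq> [] \<and> (\<exists>t\<le>length w. run t w \<in> A)"
proof (cases "w = []")
  case True
  then show ?thesis
    using assms by (auto simp: rt_accepts_def encoding_def inj_image_mem_iff[OF inj_to_nat])
next
  case False
  then have "oca_cfg (encoding A) w t 1 = to_nat (run t w)" for t
    by (simp add: encoding_cfg Suc_leI)
  then show ?thesis
    using False by (simp add: rt_accepts_def encoding_def inj_image_mem_iff[OF inj_to_nat])
qed

lemma com_encoding:
  assumes "1 \<le> i" "i < length w"
  shows "com (encoding A) w i t = card {j. j < t \<and> emit (run j (drop i w)) \<noteq> None}"
proof -
  have "oca_cfg (encoding A) w j (i + 1) = to_nat (run j (drop i w))" for j
    using encoding_cfg[of "i + 1"] assms by simp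
  then show ?thesis by (simp add: com_def encoding_def)
qed

end

lemma mcom_le:
  assumes "\<And>i. 1 \<le> i \<Longrightarrow> i < length w \<Longrightarrow> com M w i (length w) \<le> c"
  shows "mcom M w \<le> c"
  unfolding mcom_def
proof (rule Max.boundedI)
  let ?S = "{com M w i (length w) | i. 1 \<le> i \<and> i \<le> length w - 1}"
  have "?S \<subseteq> (\<lambda>i. com M w i (length w)) ` {..length w}" by auto
  then show "finite (insert 0 ?S)" using finite_subset by blast
  show "insert 0 ?S \<noteq> {}" by simp
  fix x assume "x \<in> insert 0 ?S"
  then show "x \<le> c" using assms by auto
qed

section \<open>Words of the form b^k c^l\<close>

definition bc :: "nat \<Rightarrow> nat \<Rightarrow> letter list" where
  "bc k l = replicate k LB @ replicate l LC"

text \<open>Words b^k c^l with at least one c: every suffix of a word of the language has this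
  shape, and a cell rejects as soon as it sees that its suffix does not.\<close>

definition bc_shaped :: "letter list \<Rightarrow> bool" where
  "bc_shaped u \<longleftrightarrow> (\<exists>k l. 1 \<le> l \<and> u = bc k l)"

lemma bc_Suc [simp]: "bc (Suc k) l = LB # bc k l"
  and bc_0_Suc [simp]: "bc 0 (Suc l) = LC # bc 0 l"
  and bc_0_0 [simp]: "bc 0 0 = []"
  and length_bc [simp]: "length (bc k l) = k + l"
  by (simp_all add: bc_def)

lemma take_bc: "take n (bc k l) = bc (min n k) (min (n - k) l)"
  and drop_bc: "drop n (bc k l) = bc (k - n) (l - (n - k))"
  by (simp_all add: bc_def)

lemma take_eq_bc_length: "take n w = bc k l \<Longrightarrow> k + l = min n (length w)"
  by (drule arg_cong[where f = length]) simp

lemma bc_inj [simp]: "bc k l = bc k' l' \<longleftrightarrow> k = k' \<and> l = l'"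
proof
  assume "bc k l = bc k' l'"
  then have "length (filter ((=) LB) (bc k l)) = length (filter ((=) LB) (bc k' l'))"
    and "length (bc k l) = length (bc k' l')" by simp_all
  then show "k = k' \<and> l = l'" by (simp add: bc_def)
qed simp

lemma Lbc_bc: "Lbc = {bc (2 ^ m) m | m. 1 \<le> m}"
  unfolding Lbc_def bc_def by auto

lemma bc_shaped_Cons:
  assumes "bc_shaped (a # v)" "v \<noteq> []"
  shows "bc_shaped v"
proof -
  obtain k l where "1 \<le> l" and u: "a # v = bc k l" using assms(1) bc_shaped_def by auto
  show ?thesis
  proof (cases k)
    case 0
    with \<open>1 \<le> l\<close> u obtain l' where v: "v = bc 0 l'" by (cases l) auto
    then have "1 \<le> l'" using assms(2) by (cases l') auto
    then show ?thesis using v bc_shaped_def by blast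
  next
    case (Suc k')
    then show ?thesis using u \<open>1 \<le> l\<close> bc_shaped_def by auto
  qed
qed

lemma bc_shaped_last: "bc_shaped u \<Longrightarrow> last u = LC"
  unfolding bc_shaped_def bc_def by auto

lemma not_bc_shaped_c_b: "\<not> bc_shaped (LC # LB # v)"
proof
  assume "bc_shaped (LC # LB # v)"
  then obtain k l where u: "LC # LB # v = bc k l" by (auto simp: bc_shaped_def)
  then have "k = 0" by (cases k) simp_all
  then have "LC # LB # v = replicate l LC" using u by (simp add: bc_def)
  then have "LB \<in> set (replicate l LC)" by (metis list.set_intros)
  then show False by simp
qed

section \<open>Binary incrementing\<close>

text \<open>Adding one to k-1: the digit of weight P of k is that of k-1 flipped by the incoming
  carry, and the carry propagates past it iff both are set.\<close>

lemma increment_digit: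
  assumes "1 \<le> (k::nat)" "0 < P"
  shows "odd (k div P) = (odd ((k - 1) div P) \<noteq> (k mod P = 0))"
    and "(k mod (P * 2) = 0) = (k mod P = 0 \<and> odd ((k - 1) div P))"
proof -
  define q r where "q = (k - 1) div P" and "r = (k - 1) mod P"
  have k: "k = r + 1 + q * P" and "r < P"
    using assms by (simp_all add: q_def r_def)
  have m2: "k mod (P * 2) = P * (k div P mod 2) + k mod P"
    by (rule mod_mult2_eq)
  consider "r + 1 = P" | "r + 1 < P" using \<open>r < P\<close> by linarith
  then have "odd (k div P) = (odd q \<noteq> (k mod P = 0)) \<and>
      (k mod (P * 2) = 0) = (k mod P = 0 \<and> odd q)"
  proof cases
    case 1
    then have "k div P = q + 1" "k mod P = 0" using k assms by simp_all
    then show ?thesis using m2 by auto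
  next
    case 2
    then have "k div P = q" "k mod P = r + 1"
      unfolding k by (simp_all only: div_mult_self1 mod_mult_self1) simp_all
    then show ?thesis using m2 assms by auto
  qed
  then show "odd (k div P) = (odd ((k - 1) div P) \<noteq> (k mod P = 0))"
    and "(k mod (P * 2) = 0) = (k mod P = 0 \<and> odd ((k - 1) div P))"
    by (simp_all add: q_def)
qed

text \<open>After all digits below P have passed, the carry out together with the overflow flag
  of k-1 (that is, P \<le> k-1) decides whether k = P and whether k \<ge> P.\<close>

lemma carry_exact:
  assumes "1 \<le> (k::nat)" "0 < P"
  shows "(k mod P = 0 \<and> \<not> P \<le> k - 1) \<longleftrightarrow> k = P"
  using assms by (auto simp: mod_eq_0_iff_dvd dest: dvd_imp_le)

lemma carry_overflow:
  assumes "1 \<le> (k::nat)" "0 < P" "k \<noteq> P"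
  shows "(P \<le> k - 1 \<or> k mod P = 0) \<longleftrightarrow> P \<le> k"
  using assms by (auto simp: mod_eq_0_iff_dvd dest: dvd_imp_le)

section \<open>The automaton\<close>

text \<open>Messages: a binary digit, the end marker with overflow flag, and an error signal.\<close>

datatype msg = Bit bool | Stop bool | Error

text \<open>States of b-cells: waiting for digits, counting (carry, current digit), finished
  (overflow flag), accepting; states of c-cells: start, relaying zeros, end; and the common
  states Done (silent forever) and Reject.\<close>

datatype st = BWait | BCount bool bool | BEnd bool | Accept
  | CStart | CRelay | CEnd | Done | Reject

instance msg :: countable by countable_datatype
instance st :: countable by countable_datatype

lemma finite_st: "finite (UNIV :: st set)"
proof -
  have "(UNIV :: st set) = range (case_prod BCount) \<union> range BEnd
      \<union> {BWait, Accept, CStart, CRelay, CEnd, Done, Reject}"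
    by (rule set_eqI, case_tac x) auto
  then show ?thesis
    by (metis finite.emptyI finite.insertI finite_Un finite_imageI finite_class.finite_UNIV)
qed

definition counter_start :: "letter \<Rightarrow> st" where
  "counter_start a = (case a of LB \<Rightarrow> BWait | LC \<Rightarrow> CStart)"

fun counter_emit :: "st \<Rightarrow> msg option" where
  "counter_emit BWait = None"
| "counter_emit (BCount _ x) = Some (Bit x)"
| "counter_emit (BEnd ov) = Some (Stop ov)"
| "counter_emit Accept = Some (Stop True)"
| "counter_emit CStart = Some (Bit False)"
| "counter_emit CRelay = Some (Bit False)"
| "counter_emit CEnd = Some (Stop False)"
| "counter_emit Done = None"
| "counter_emit Reject = Some Error"

fun count :: "bool \<Rightarrow> msg cmsg \<Rightarrow> st" where
  "count cr (Sym (Bit y)) = BCount (cr \<and> y) (y \<noteq> cr)"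
| "count cr (Sym (Stop ov)) = (if cr \<and> \<not> ov then Accept else BEnd (ov \<or> cr))"
| "count cr (Sym Error) = Reject"
| "count cr Silent = BWait"
| "count cr Border = Reject"

fun relay :: "msg cmsg \<Rightarrow> st" where
  "relay (Sym (Bit _)) = CRelay"
| "relay (Sym (Stop _)) = CEnd"
| "relay (Sym Error) = Reject"
| "relay Silent = Done"
| "relay Border = CEnd"

definition finish :: "msg cmsg \<Rightarrow> st" where
  "finish m = (if m = Sym Error then Reject else Done)"

fun counter_update :: "msg cmsg \<Rightarrow> st \<Rightarrow> st" where
  "counter_update m BWait = count True m"
| "counter_update m (BCount cr _) = count cr m"
| "counter_update m CStart = (if m = Silent then Reject else relay m)"
| "counter_update m CRelay = relay m"
| "counter_update m (BEnd _) = finish m"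
| "counter_update m Accept = finish m"
| "counter_update m CEnd = finish m"
| "counter_update m Done = finish m"
| "counter_update m Reject = Reject"

lemma counter_update_Error [simp]: "counter_update (Sym Error) s = Reject"
  by (cases s) (simp_all add: finish_def)

interpretation counter: one_way_automaton counter_start counter_emit counter_update .

definition counter_oca :: "(letter, nat, nat) ca" where
  "counter_oca = counter.encoding {Accept}"

section \<open>The invariant\<close>

text \<open>What the state s of the cell seeing suffix u at time t reveals about u.  A counting
  b-cell has seen k b's and j+1 c's, holds digit j of k and the carry into digit j+1.\<close>

fun state_spec :: "letter list \<Rightarrow> nat \<Rightarrow> st \<Rightarrow> bool" where
  "state_spec u t BWait = (take (Suc t) u = bc (Suc t) 0)"
| "state_spec u t (BCount cr x) = (\<exists>k j. 1 \<le> k \<and> t = k + j \<and> take (Suc t) u = bc k (Suc j)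
      \<and> x = odd (k div 2 ^ j) \<and> cr = (k mod 2 ^ Suc j = 0))"
| "state_spec u t (BEnd ov) = (\<exists>k l. 1 \<le> k \<and> 1 \<le> l \<and> u = bc k l \<and> t = length u
      \<and> ov = (2 ^ l \<le> k) \<and> k \<noteq> 2 ^ l)"
| "state_spec u t Accept = (\<exists>l. 1 \<le> l \<and> u = bc (2 ^ l) l \<and> t = length u)"
| "state_spec u t CStart = (t = 0 \<and> hd u = LC)"
| "state_spec u t CRelay = (1 \<le> t \<and> take (Suc t) u = bc 0 (Suc t))"
| "state_spec u t CEnd = (1 \<le> t \<and> u = bc 0 t)"
| "state_spec u t Done = (length u < t)"
| "state_spec u t Reject = (\<not> bc_shaped u)"

fun msg_spec :: "letter list \<Rightarrow> nat \<Rightarrow> msg cmsg \<Rightarrow> bool" where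
  "msg_spec v t Border = (v = [] \<and> t = 0)"
| "msg_spec v t Silent = (take (Suc t) v = bc (Suc t) 0 \<or> length v < t)"
| "msg_spec v t (Sym (Bit y)) = (\<exists>k j. t = k + j \<and> take (Suc t) v = bc k (Suc j)
      \<and> y = odd (k div 2 ^ j))"
| "msg_spec v t (Sym (Stop ov)) = (\<exists>k l. 1 \<le> l \<and> v = bc k l \<and> t = length v
      \<and> ov = (2 ^ l \<le> k))"
| "msg_spec v t (Sym Error) = (v \<noteq> [] \<and> \<not> bc_shaped v)"

lemma msg_spec_emit:
  assumes "v \<noteq> []" "state_spec v t s"
  shows "msg_spec v t (to_msg (counter_emit s))"
proof (cases s)
  case CStart
  then show ?thesis using assms
    by (cases v) (auto simp: to_msg_def intro!: exI[of _ 0])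
next
  case CRelay
  then show ?thesis using assms
    by (simp add: to_msg_def del: bc_0_Suc)
next
  case CEnd
  then show ?thesis using assms by (auto simp: to_msg_def intro!: exI[of _ 0])
qed (use assms in \<open>auto simp: to_msg_def\<close>)

lemma msg_spec_inbox:
  assumes "v \<noteq> [] \<Longrightarrow> state_spec v t (counter.run t v)"
  shows "msg_spec v t (counter.inbox t v)"
  using assms msg_spec_emit by (auto simp: counter.inbox_def)

text \<open>Reading a message, given the first t letters of the neighbour's suffix: a silent
  neighbour still counting has only b's; a digit reveals one more c; an end marker reveals
  that nothing follows.\<close>

lemma read_Silent:
  assumes "msg_spec v t Silent" "take t v = bc k j" "t = k + j"
  shows "j = 0 \<and> take (Suc t) v = bc (Suc t) 0"
proof -
  have "min t (length v) = t" using take_eq_bc_length[OF assms(2)] assms(3) by simp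
  then have v: "take (Suc t) v = bc (Suc t) 0" using assms(1) by auto
  have "take t v = take t (take (Suc t) v)" by simp
  also have "\<dots> = bc t 0" unfolding v by (simp add: take_bc del: bc_Suc)
  finally show ?thesis using assms(2) v by simp
qed

lemma read_Bit:
  assumes "msg_spec v t (Sym (Bit y))" "take t v = bc k j"
  shows "take (Suc t) v = bc k (Suc j) \<and> y = odd (k div 2 ^ j)"
proof -
  obtain K J where KJ: "t = K + J" "take (Suc t) v = bc K (Suc J)" "y = odd (K div 2 ^ J)"
    using assms(1) by auto
  have "take t v = take t (take (Suc t) v)" by simp
  also have "\<dots> = bc K J" unfolding KJ(2) using KJ(1) by (simp add: take_bc)
  finally show ?thesis using KJ assms(2) by simp
qed

lemma read_Stop:
  assumes "msg_spec v t (Sym (Stop ov))" "take t v = bc k j"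
  shows "v = bc k j \<and> 1 \<le> j \<and> t = length v \<and> ov = (2 ^ j \<le> k)"
  using assms by auto

lemma step_BWait:
  assumes "take (Suc t) (a # v) = bc (Suc t) 0" "msg_spec v t m" "m \<noteq> Sym Error"
  shows "state_spec (a # v) (Suc t) (count True m)"
proof -
  have a: "a = LB" and v: "take t v = bc t 0" using assms(1) by simp_all
  show ?thesis
  proof (cases m)
    case Silent
    with assms(2) have "msg_spec v t Silent" by simp
    from read_Silent[OF this v] have "take (Suc t) v = bc (Suc t) 0" by simp
    then show ?thesis using Silent a by simp
  next
    case Border
    then show ?thesis using assms(2) a bc_shaped_last by fastforce
  next
    case (Sym x)
    show ?thesis
    proof (cases x)
      case (Bit y)
      with Sym assms(2) have "msg_spec v t (Sym (Bit y))" by simp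
      from read_Bit[OF this v] have "take (Suc t) v = bc t 1" "y = odd t" by simp_all
      then show ?thesis using Sym Bit a
        by (simp, intro exI[of _ "Suc t"] exI[of _ 0]) auto
    next
      case (Stop ov)
      with Sym assms(2) have "msg_spec v t (Sym (Stop ov))" by simp
      from read_Stop[OF this v] have "1 \<le> (0::nat)" by blast
      then show ?thesis by simp
    next
      case Error
      then show ?thesis using Sym assms(3) by simp
    qed
  qed
qed

text \<open>The end marker reaches a b-cell that has seen all of b^k c^l: the carry out of the
  top digit and the overflow flag of k-1 decide whether k = 2^l.\<close>

lemma count_verdict:
  assumes "1 \<le> k" "u = bc k l" "1 \<le> l" "cr = (k mod 2 ^ l = 0)" "ov = (2 ^ l \<le> k - 1)"
  shows "state_spec u (length u) (count cr (Sym (Stop ov)))"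
proof (cases "cr \<and> \<not> ov")
  case True
  then have "k = 2 ^ l" using carry_exact[OF assms(1), of "2 ^ l"] assms(4,5) by simp
  then show ?thesis using True assms(2,3) by auto
next
  case False
  then have verdict: "(ov \<or> cr) = (2 ^ l \<le> k) \<and> k \<noteq> 2 ^ l"
    using carry_exact[OF assms(1), of "2 ^ l"] carry_overflow[OF assms(1), of "2 ^ l"] assms(4,5)
    by auto
  have "state_spec u (length u) (BEnd (ov \<or> cr))"
    unfolding state_spec.simps
    by (intro exI[of _ k] exI[of _ l]) (use verdict assms(1-3) in simp)
  moreover have "count cr (Sym (Stop ov)) = BEnd (ov \<or> cr)" using False by simp
  ultimately show ?thesis by simp
qed

lemma step_BCount:
  assumes "1 \<le> k" "t = k + j" "take (Suc t) (a # v) = bc k (Suc j)"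
    and "cr = (k mod 2 ^ Suc j = 0)" "msg_spec v t m" "m \<noteq> Sym Error"
  shows "state_spec (a # v) (Suc t) (count cr m)"
proof -
  obtain k' where k: "k = Suc k'" using assms(1) by (cases k) auto
  then have a: "a = LB" and v: "take t v = bc k' (Suc j)" using assms(3) by simp_all
  show ?thesis
  proof (cases m)
    case Silent
    with assms(5) have "msg_spec v t Silent" by simp
    from read_Silent[OF this v] show ?thesis using assms(2) k by simp
  next
    case Border
    then show ?thesis using assms(2,5) k by simp
  next
    case (Sym x)
    show ?thesis
    proof (cases x)
      case (Bit y)
      with Sym assms(5) have "msg_spec v t (Sym (Bit y))" by simp
      from read_Bit[OF this v]
      have v': "take (Suc t) v = bc k' (Suc (Suc j))" and y: "y = odd (k' div 2 ^ Suc j)"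
        by simp_all
      have "(y \<noteq> cr) = odd (k div 2 ^ Suc j) \<and> (cr \<and> y) = (k mod 2 ^ Suc (Suc j) = 0)"
        using increment_digit[OF assms(1), of "2 ^ Suc j"] y assms(4) k
        by (simp add: mult.commute)
      then show ?thesis using Sym Bit a v' k assms(1,2)
        by (simp, intro exI[of _ k] exI[of _ "Suc j"]) simp
    next
      case (Stop ov)
      with Sym assms(5) have "msg_spec v t (Sym (Stop ov))" by simp
      from read_Stop[OF this v]
      have "v = bc k' (Suc j)" "t = length v" "ov = (2 ^ Suc j \<le> k')" by simp_all
      then have "a # v = bc k (Suc j)" "Suc t = length (a # v)" "ov = (2 ^ Suc j \<le> k - 1)"
        using a k by simp_all
      from count_verdict[OF assms(1) this(1) _ assms(4) this(3)] this(2)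
      show ?thesis using Sym Stop by simp
    next
      case Error
      then show ?thesis using Sym assms(6) by simp
    qed
  qed
qed

lemma step_CStart:
  assumes "msg_spec v 0 m" "m \<noteq> Sym Error"
  shows "state_spec (LC # v) 1 (if m = Silent then Reject else relay m)"
proof -
  have v: "take 0 v = bc 0 0" by simp
  show ?thesis
  proof (cases m)
    case Silent
    with assms(1) have "msg_spec v 0 Silent" by simp
    from read_Silent[OF this v] have "take 1 v = [LB]" by simp
    then obtain v' where "v = LB # v'" by (cases v) auto
    then show ?thesis using Silent not_bc_shaped_c_b by simp
  next
    case Border
    then show ?thesis using assms(1) by simp
  next
    case (Sym x)
    show ?thesis
    proof (cases x)
      case (Bit y)
      with Sym assms(1) have "msg_spec v 0 (Sym (Bit y))" by simp
      from read_Bit[OF this v] have "take 1 v = bc 0 1" by simp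
      then show ?thesis using Sym Bit by simp
    next
      case (Stop ov)
      with Sym assms(1) have "msg_spec v 0 (Sym (Stop ov))" by simp
      from read_Stop[OF this v] show ?thesis by simp
    next
      case Error
      then show ?thesis using assms(2) Sym by simp
    qed
  qed
qed

lemma step_CRelay:
  assumes "1 \<le> t" "take (Suc t) (a # v) = bc 0 (Suc t)" "msg_spec v t m" "m \<noteq> Sym Error"
  shows "state_spec (a # v) (Suc t) (relay m)"
proof -
  have a: "a = LC" and v: "take t v = bc 0 t" using assms(2) by simp_all
  show ?thesis
  proof (cases m)
    case Silent
    with assms(3) have "msg_spec v t Silent" by simp
    from read_Silent[OF this v] show ?thesis using assms(1) by simp
  next
    case Border
    then show ?thesis using assms(1,3) by simp
  next
    case (Sym x)
    show ?thesis
    proof (cases x)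
      case (Bit y)
      with Sym assms(3) have "msg_spec v t (Sym (Bit y))" by simp
      from read_Bit[OF this v] have "take (Suc t) v = bc 0 (Suc t)" by simp
      then show ?thesis using Sym Bit a by simp
    next
      case (Stop ov)
      with Sym assms(3) have "msg_spec v t (Sym (Stop ov))" by simp
      from read_Stop[OF this v] have "v = bc 0 t" by blast
      then show ?thesis using Sym Stop a assms(1) by simp
    next
      case Error
      then show ?thesis using assms(4) Sym by simp
    qed
  qed
qed

lemma step_finished:
  assumes "length u \<le> t" "m \<noteq> Sym Error"
  shows "state_spec u (Suc t) (finish m)"
  using assms by (simp add: finish_def)

lemma state_spec_step:
  assumes "state_spec (a # v) t s" "msg_spec v t m"
  shows "state_spec (a # v) (Suc t) (counter_update m s)"
proof (cases "m = Sym Error")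
  case True
  then show ?thesis using assms(2) bc_shaped_Cons by auto
next
  case False
  show ?thesis
  proof (cases s)
    case BWait
    then show ?thesis using assms step_BWait False by simp
  next
    case (BCount cr x)
    then obtain k j where "1 \<le> k" "t = k + j" "take (Suc t) (a # v) = bc k (Suc j)"
      and "cr = (k mod 2 ^ Suc j = 0)"
      using assms(1) by (simp only: state_spec.simps) blast
    then show ?thesis using BCount step_BCount[OF _ _ _ _ assms(2) False] by simp
  next
    case CStart
    then show ?thesis using assms step_CStart False by simp
  next
    case CRelay
    then show ?thesis using assms step_CRelay False by simp
  next
    case (BEnd ov)
    then have "length (a # v) \<le> t" using assms(1) by (simp only: state_spec.simps) auto
    then show ?thesis using BEnd step_finished False by simp
  next
    case Accept
    then have "length (a # v) \<le> t" using assms(1) by (simp only: state_spec.simps) auto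
    then show ?thesis using Accept step_finished False by simp
  next
    case CEnd
    then have "length (a # v) \<le> t" using assms(1) by simp
    then show ?thesis using CEnd step_finished False by simp
  next
    case Done
    then have "length (a # v) \<le> t" using assms(1) by simp
    then show ?thesis using Done step_finished False by simp
  next
    case Reject
    then show ?thesis using assms(1) by simp
  qed
qed

theorem state_spec_run: "u \<noteq> [] \<Longrightarrow> state_spec u t (counter.run t u)"
proof (induction t arbitrary: u)
  case 0
  then obtain a v where "u = a # v" by (cases u) auto
  then show ?case unfolding counter.run.simps(1) by (cases a) (simp_all add: counter_start_def bc_def)
next
  case (Suc t)
  then obtain a v where u: "u = a # v" by (cases u) auto
  have "msg_spec v t (counter.inbox t v)"
    using msg_spec_inbox Suc.IH by blast
  then show ?case using state_spec_step Suc.IH[OF Suc.prems] u by simp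
qed

section \<open>Acceptance and communication\<close>

text \<open>At time n the leftmost cell of b^(2^m) c^m, of length n, has read the whole word.\<close>

lemma accepts_word_of_Lbc:
  assumes "1 \<le> m"
  shows "counter.run (length (bc (2 ^ m) m)) (bc (2 ^ m) m) = Accept"
proof -
  let ?w = "bc (2 ^ m) m"
  let ?n = "length ?w"
  have "?w \<noteq> []" using assms by (simp add: bc_def)
  then have spec: "state_spec ?w ?n (counter.run ?n ?w)" by (rule state_spec_run)
  have read_all: "a + b = ?n" if "take (Suc ?n) ?w = bc a b" for a b
    using take_eq_bc_length[OF that] by simp
  show ?thesis
  proof (cases "counter.run ?n ?w")
    case BWait
    with spec have "take (Suc ?n) ?w = bc (Suc ?n) 0" by (simp only: state_spec.simps)
    from read_all[OF this] show ?thesis by simp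
  next
    case (BCount cr x)
    have "\<exists>k j. ?n = k + j \<and> take (Suc ?n) ?w = bc k (Suc j)"
      using spec unfolding BCount state_spec.simps by blast
    then obtain k j where "?n = k + j" "take (Suc ?n) ?w = bc k (Suc j)" by blast
    with read_all[OF this(2)] show ?thesis by simp
  next
    case CRelay
    with spec have "take (Suc ?n) ?w = bc 0 (Suc ?n)" by (simp only: state_spec.simps)
    from read_all[OF this] show ?thesis by simp
  next
    case (BEnd ov)
    have "\<exists>k l. ?w = bc k l \<and> k \<noteq> 2 ^ l" using spec unfolding BEnd state_spec.simps by blast
    then obtain k l where "?w = bc k l" "k \<noteq> 2 ^ l" by blast
    moreover from this(1) have "k = 2 ^ l" by (simp, metis)
    ultimately show ?thesis by simp
  next
    case CEnd
    with spec have "?w = bc 0 ?n" by (simp only: state_spec.simps)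
    then show ?thesis by simp
  next
    case Reject
    with spec have "\<not> bc_shaped ?w" by simp
    then show ?thesis using assms bc_shaped_def by blast
  qed (use spec in simp_all)
qed

lemma counter_accepts: "rt_accepts counter_oca w \<longleftrightarrow> w \<in> Lbc"
proof -
  have "rt_accepts counter_oca w \<longleftrightarrow> w \<noteq> [] \<and> (\<exists>t\<le>length w. counter.run t w = Accept)"
    unfolding counter_oca_def
    by (subst counter.rt_accepts_encoding) (auto simp: counter_start_def split: letter.split)
  also have "\<dots> \<longleftrightarrow> w \<in> Lbc"
  proof
    assume "w \<noteq> [] \<and> (\<exists>t\<le>length w. counter.run t w = Accept)"
    then obtain t where "state_spec w t Accept" using state_spec_run by metis
    then show "w \<in> Lbc" by (auto simp: Lbc_bc)
  next
    assume "w \<in> Lbc"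
    then obtain m where "1 \<le> m" "w = bc (2 ^ m) m" by (auto simp: Lbc_bc)
    then show "w \<noteq> [] \<and> (\<exists>t\<le>length w. counter.run t w = Accept)"
      using accepts_word_of_Lbc by (auto simp: bc_def)
  qed
  finally show ?thesis .
qed

lemma msg_spec_window:
  assumes "msg_spec (bc k l) t (Sym x)" "1 \<le> l"
  shows "k \<le> t \<and> t \<le> k + l"
proof (cases x)
  case (Bit y)
  then obtain K J where t: "t = K + J" and pre: "take (Suc t) (bc k l) = bc K (Suc J)"
    using assms(1) by auto
  have "min (Suc t - k) l = Suc J" using pre by (simp add: take_bc)
  moreover have "K + Suc J = min (Suc t) (k + l)" using take_eq_bc_length[OF pre] by simp
  ultimately show ?thesis using t by (auto simp: min_def split: if_splits)
next
  case Error
  then show ?thesis using assms bc_shaped_def by auto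
qed (use assms in auto)

lemma com_bound_suffix:
  assumes "1 \<le> l"
  shows "card {j. j < n \<and> counter_emit (counter.run j (bc k l)) \<noteq> None} \<le> Suc l"
proof -
  have "{j. j < n \<and> counter_emit (counter.run j (bc k l)) \<noteq> None} \<subseteq> {k..k + l}"
  proof (rule subsetI)
    fix j assume "j \<in> {j. j < n \<and> counter_emit (counter.run j (bc k l)) \<noteq> None}"
    then obtain x where x: "to_msg (counter_emit (counter.run j (bc k l))) = Sym x"
      by (auto simp: to_msg_def)
    have "bc k l \<noteq> []" using assms by (simp add: bc_def)
    then have "msg_spec (bc k l) j (to_msg (counter_emit (counter.run j (bc k l))))"
      using msg_spec_emit state_spec_run by blast
    from msg_spec_window[OF this[unfolded x] assms] show "j \<in> {k..k + l}" by simp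
  qed
  then have "card {j. j < n \<and> counter_emit (counter.run j (bc k l)) \<noteq> None} \<le> card {k..k + l}"
    by (rule card_mono[rotated]) simp
  then show ?thesis by simp
qed

lemma counter_mcom:
  assumes "1 \<le> m"
  shows "mcom counter_oca (bc (2 ^ m) m) \<le> Suc m"
proof (rule mcom_le)
  let ?w = "bc (2 ^ m) m"
  fix i assume i: "1 \<le> i" "i < length ?w"
  define l where "l = m - (i - 2 ^ m)"
  have drop: "drop i ?w = bc (2 ^ m - i) l" by (simp add: drop_bc l_def)
  have "1 \<le> l" using i assms by (simp add: l_def)
  have "com counter_oca ?w i (length ?w)
      = card {j. j < length ?w \<and> counter_emit (counter.run j (drop i ?w)) \<noteq> None}"
    unfolding counter_oca_def using i by (rule counter.com_encoding)
  also have "\<dots> \<le> Suc l" unfolding drop by (rule com_bound_suffix[OF \<open>1 \<le> l\<close>])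
  also have "\<dots> \<le> Suc m" by (simp add: l_def)
  finally show "com counter_oca ?w i (length ?w) \<le> Suc m" .
qed

theorem mainTheorem9:
  shows "in_rt_MC_OCA Lbc (\<lambda>n. ln (real n))"
  unfolding in_rt_MC_OCA_def
proof (intro exI[of _ counter_oca] conjI exI[of _ "\<lambda>n. log 2 (real n) + 1"] allI impI)
  show "is_oca counter_oca"
    unfolding counter_oca_def using finite_st
    by (intro counter.is_oca_encoding) (auto simp: inj_def counter_start_def split: letter.split)
  show "{w. rt_accepts counter_oca w} = Lbc" using counter_accepts by auto
  show "(\<lambda>n. log 2 (real n) + 1) \<in> O(\<lambda>n. ln (real n))" by real_asymp
  fix w assume "rt_accepts counter_oca w"
  then obtain m where m: "1 \<le> m" "w = bc (2 ^ m) m" using counter_accepts by (auto simp: Lbc_bc)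
  have "real m \<le> log 2 (real (length w))" using m by (intro le_log2_of_power) simp
  moreover have "mcom counter_oca w \<le> Suc m" using counter_mcom m by simp
  ultimately show "real (mcom counter_oca w) \<le> log 2 (real (length w)) + 1" by linarith
qed

end
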